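(* Let $N$ be a finite set with $|N|\ge2$, and assume that $\langle o,\eta\rangle\le u$, with $o\in\mathbb{R}^{\Upsilon}$ and $u\in\mathbb{R}$, is valid for all $\eta\in P_N$. Then $u\ge 0$. Moreover: (i) $u=0$ if and only if the face of $P_N$ defined by this inequality contains $\eta_{G_\emptyset}$ (the zero vector), where $G_\emptyset$ is the empty graph over $N$; (ii) if $u=0$ then $o(a|B)\le 0$ for every $(a|B)\in\Upsilon$; (iii) the facet-defining inequalities for $P_N$ that are tight at the empty graph are exactly (up to positive scaling) the inequalities $-\eta(a|B)\le 0$, $(a|B)\in\Upsilon$; (iv) if the inequality is facet-defining for $P_N$ and $u>0$, then $o(a|B)\ge o(a|A)\ge 0$ whenever $a\in N$ and $\emptyset\neq A\subseteq B\subseteq N\setminus\{a\}$.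
   Context: $\mathrm{DAG}(N)$ is the set of acyclic directed graphs over $N$; $\mathrm{pa}_G(a)$ is the parent set of $a$ in $G$; the empty graph has no arrows. $\Upsilon=\{(a|B): a\in N,\ \emptyset\neq B\subseteq N\setminus\{a\}\}$; $\eta_G\in\mathbb{R}^{\Upsilon}$ has $\eta_G(a|B)=1$ if $B=\mathrm{pa}_G(a)$, else $0$; $P_N=\mathrm{conv}\{\eta_G:G\in\mathrm{DAG}(N)\}$ is the family-variable polytope, of dimension $|\Upsilon|$. *)

theory Defs
  imports Complex_Main
begin

text \<open>A directed graph over N is represented by its set of arrows E (pairs (b,a) meaning b -> a).\<close>

definition DAGs :: "'a set \<Rightarrow> ('a \<times> 'a) set set" where
  "DAGs N = {E. E \<subseteq> N \<times> N \<and> acyclic E}"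

definition pa :: "('a \<times> 'a) set \<Rightarrow> 'a \<Rightarrow> 'a set" where
  "pa E a = {b. (b, a) \<in> E}"

definition Ups :: "'a set \<Rightarrow> ('a \<times> 'a set) set" where
  "Ups N = {(a, B). a \<in> N \<and> B \<noteq> {} \<and> B \<subseteq> N - {a}}"

text \<open>Vectors in R^Upsilon are functions, meaningful on Ups N (and taken to be 0 outside).\<close>
definition eta :: "'a set \<Rightarrow> ('a \<times> 'a) set \<Rightarrow> ('a \<times> 'a set) \<Rightarrow> real" where
  "eta N E = (\<lambda>(a, B). if (a, B) \<in> Ups N \<and> B = pa E a then 1 else 0)"

definition inner_Ups :: "'a set \<Rightarrow> ('a \<times> 'a set \<Rightarrow> real) \<Rightarrow> ('a \<times> 'a set \<Rightarrow> real) \<Rightarrow> real" where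
  "inner_Ups N o' x = (\<Sum>c\<in>Ups N. o' c * x c)"

definition conv_fin :: "('b \<Rightarrow> real) set \<Rightarrow> ('b \<Rightarrow> real) set" where
  "conv_fin V = {x. \<exists>w. (\<forall>v\<in>V. w v \<ge> 0) \<and> (\<Sum>v\<in>V. w v) = 1 \<and>
                        x = (\<lambda>c. \<Sum>v\<in>V. w v * v c)}"

definition P :: "'a set \<Rightarrow> ('a \<times> 'a set \<Rightarrow> real) set" where
  "P N = conv_fin (eta N ` DAGs N)"

definition valid :: "'a set \<Rightarrow> ('a \<times> 'a set \<Rightarrow> real) \<Rightarrow> real \<Rightarrow> bool" where
  "valid N o' u \<longleftrightarrow> (\<forall>x\<in>P N. inner_Ups N o' x \<le> u)"

definition face :: "'a set \<Rightarrow> ('a \<times> 'a set \<Rightarrow> real) \<Rightarrow> real \<Rightarrow> ('a \<times> 'a set \<Rightarrow> real) set" where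
  "face N o' u = {x \<in> P N. inner_Ups N o' x = u}"

definition aff_indep :: "'a set \<Rightarrow> ('a \<times> 'a set \<Rightarrow> real) set \<Rightarrow> bool" where
  "aff_indep N S \<longleftrightarrow> finite S \<and>
     (\<forall>c. (\<Sum>x\<in>S. c x) = 0 \<and> (\<forall>i\<in>Ups N. (\<Sum>x\<in>S. c x * x i) = 0) \<longrightarrow> (\<forall>x\<in>S. c x = 0))"

definition has_aff_dim :: "'a set \<Rightarrow> ('a \<times> 'a set \<Rightarrow> real) set \<Rightarrow> nat \<Rightarrow> bool" where
  "has_aff_dim N F d \<longleftrightarrow> (\<exists>S\<subseteq>F. aff_indep N S \<and> card S = d + 1) \<and>
                          (\<forall>S\<subseteq>F. aff_indep N S \<longrightarrow> card S \<le> d + 1)"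

text \<open>Facet-defining: valid and the induced face has dimension dim P_N - 1 = |Upsilon| - 1.\<close>
definition facet_defining :: "'a set \<Rightarrow> ('a \<times> 'a set \<Rightarrow> real) \<Rightarrow> real \<Rightarrow> bool" where
  "facet_defining N o' u \<longleftrightarrow> valid N o' u \<and> has_aff_dim N (face N o' u) (card (Ups N) - 1)"

end

theory Submission
  imports Defs
begin

text \<open>
  Every vertex of the polytope is nonnegative and the zero vector (the empty graph) lies in it,
  so the right-hand side is nonnegative and is zero exactly when the inequality is tight at zero.
  Since every unit vector is a vertex (a star graph), a valid inequality with zero right-hand
  side has nonpositive coefficients, and if it defines a facet, a second nonzero coefficient
  would make the face lie in two coordinate hyperplanes, which is too small for a facet.
  When the right-hand side is positive, a negative coefficient o(a|A), or o(a|B) < o(a|A) with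
  A contained in B, would let one improve every tight graph in which a has parents A (resp. B)
  by shrinking these parents; hence all tight graphs, and so the whole face, lie in a coordinate
  hyperplane, which again contradicts the dimension of a facet.
\<close>

lemma exists_nontrivial_vanishing_combination:
  fixes f :: "'k \<Rightarrow> 'i \<Rightarrow> real"
  assumes "finite I" "finite K" "card I < card K"
  shows "\<exists>c. (\<exists>k\<in>K. c k \<noteq> 0) \<and> (\<forall>i\<in>I. (\<Sum>k\<in>K. c k * f k i) = 0)"
  using assms
proof (induction I arbitrary: K f rule: finite_induct)
  case empty
  then obtain k0 where "k0 \<in> K" by fastforce
  then show ?case by (intro exI[of _ "\<lambda>k. if k = k0 then 1 else 0"]) auto
next
  case (insert j I)
  show ?case
  proof (cases "\<forall>k\<in>K. f k j = 0")
    case True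
    with insert show ?thesis by auto
  next
    case False
    then obtain k0 where k0: "k0 \<in> K" "f k0 j \<noteq> 0" by auto
    \<comment> \<open>Gaussian elimination of the coordinate j using the vector k0.\<close>
    define K' where "K' = K - {k0}"
    define f' where "f' = (\<lambda>k i. f k i - f k j / f k0 j * f k0 i)"
    have "card I < card K'"
      using insert.prems insert.hyps k0 unfolding K'_def by (simp add: card_Diff_singleton)
    with insert.IH[of K' f'] insert.prems obtain c' where
      c': "\<exists>k\<in>K'. c' k \<noteq> 0" "\<forall>i\<in>I. (\<Sum>k\<in>K'. c' k * f' k i) = 0"
      unfolding K'_def by auto
    define s where "s = (\<Sum>k\<in>K'. c' k * f k j)"
    define c where "c = (\<lambda>k. if k = k0 then - s / f k0 j else c' k)"
    have split: "(\<Sum>k\<in>K. c k * f k i) = c k0 * f k0 i + (\<Sum>k\<in>K'. c' k * f k i)" for i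
    proof -
      have "(\<Sum>k\<in>K. c k * f k i) = c k0 * f k0 i + (\<Sum>k\<in>K'. c k * f k i)"
        using k0 insert.prems unfolding K'_def by (simp add: sum.remove)
      also have "(\<Sum>k\<in>K'. c k * f k i) = (\<Sum>k\<in>K'. c' k * f k i)"
        by (rule sum.cong) (auto simp: c_def K'_def)
      finally show ?thesis .
    qed
    have "(\<Sum>k\<in>K. c k * f k i) = 0" if i: "i \<in> insert j I" for i
    proof (cases "i = j")
      case True
      then show ?thesis using split[of j] k0 by (simp add: s_def c_def)
    next
      case False
      have "(\<Sum>k\<in>K'. c' k * f' k i) = (\<Sum>k\<in>K'. c' k * f k i) - s / f k0 j * f k0 i"
        unfolding f'_def s_def
        by (simp add: algebra_simps sum_subtractf sum_distrib_left sum_distrib_right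
            sum_divide_distrib)
      moreover have "(\<Sum>k\<in>K'. c' k * f' k i) = 0" using c' False i by auto
      ultimately show ?thesis using split[of i] by (simp add: c_def)
    qed
    moreover have "\<exists>k\<in>K. c k \<noteq> 0" using c' unfolding c_def K'_def by auto
    ultimately show ?thesis by blast
  qed
qed

lemma aff_indep_card_le_affine_coords:
  assumes fU: "finite (Ups N)" and R: "R \<subseteq> Ups N" and S: "aff_indep N S"
    and affine: "\<forall>x\<in>S. \<forall>r\<in>R. x r = \<alpha> r + (\<Sum>i\<in>Ups N - R. \<beta> r i * x i)"
  shows "card S \<le> card (Ups N - R) + 1"
proof (rule ccontr)
  assume too_many: "\<not> ?thesis"
  \<comment> \<open>None is the homogenising coordinate; the remaining coordinates are those outside R.\<close>
  define I where "I = insert None (Some ` (Ups N - R))"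
  define f where "f = (\<lambda>(x::'a \<times> 'a set \<Rightarrow> real) i. case i of None \<Rightarrow> 1 | Some j \<Rightarrow> x j)"
  have "card I = card (Ups N - R) + 1" "finite I" unfolding I_def using fU by (simp_all add: card_image)
  moreover have "finite S" using S unfolding aff_indep_def by auto
  ultimately obtain c where c: "\<exists>x\<in>S. c x \<noteq> 0" "\<forall>i\<in>I. (\<Sum>x\<in>S. c x * f x i) = 0"
    using exists_nontrivial_vanishing_combination[of I S f] too_many by auto
  have sum0: "(\<Sum>x\<in>S. c x) = 0" using c(2)[rule_format, of None] by (simp add: I_def f_def)
  have outside: "(\<Sum>x\<in>S. c x * x i) = 0" if "i \<in> Ups N - R" for i
    using c(2)[rule_format, of "Some i"] that by (simp add: I_def f_def)
  have "(\<Sum>x\<in>S. c x * x r) = 0" if r: "r \<in> R" for r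
  proof -
    have "(\<Sum>x\<in>S. c x * x r) = (\<Sum>x\<in>S. c x * (\<alpha> r + (\<Sum>i\<in>Ups N - R. \<beta> r i * x i)))"
      using affine r by (intro sum.cong) auto
    also have "\<dots> = \<alpha> r * (\<Sum>x\<in>S. c x) + (\<Sum>i\<in>Ups N - R. \<beta> r i * (\<Sum>x\<in>S. c x * x i))"
      by (simp add: algebra_simps sum.distrib sum_distrib_left sum_distrib_right sum.swap[of _ S])
    also have "\<dots> = 0" using sum0 outside by simp
    finally show ?thesis .
  qed
  with outside have "\<forall>i\<in>Ups N. (\<Sum>x\<in>S. c x * x i) = 0" by blast
  with S sum0 have "\<forall>x\<in>S. c x = 0" unfolding aff_indep_def by blast
  with c(1) show False by auto
qed

lemma aff_indep_card_le_vanishing_coords: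
  assumes "finite (Ups N)" "R \<subseteq> Ups N" "aff_indep N S" "\<forall>x\<in>S. \<forall>r\<in>R. x r = 0"
  shows "card S \<le> card (Ups N - R) + 1"
  using aff_indep_card_le_affine_coords[of N R S "\<lambda>_. 0" "\<lambda>_ _. 0"] assms by simp

definition unit_vec :: "'b \<Rightarrow> 'b \<Rightarrow> real" where
  "unit_vec d = (\<lambda>c. if c = d then 1 else 0)"

lemma finite_Ups: "finite N \<Longrightarrow> finite (Ups N)"
  by (rule finite_subset[of _ "N \<times> Pow N"]) (auto simp: Ups_def)

lemma Ups_nonempty:
  assumes "finite N" "card N \<ge> 2" shows "Ups N \<noteq> {}"
proof -
  obtain a b where "a \<in> N" "b \<in> N" "a \<noteq> b"
    using assms by (metis One_nat_def card_le_Suc0_iff_eq not_less_eq_eq numeral_2_eq_2)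
  then have "(a, {b}) \<in> Ups N" by (auto simp: Ups_def)
  then show ?thesis by auto
qed

lemma finite_DAGs: "finite N \<Longrightarrow> finite (DAGs N)"
  by (rule finite_subset[of _ "Pow (N \<times> N)"]) (auto simp: DAGs_def)

lemma empty_in_DAGs: "{} \<in> DAGs N"
  by (simp add: DAGs_def acyclic_def)

lemma eta_empty: "eta N {} = (\<lambda>c. 0)"
  by (auto simp: eta_def pa_def Ups_def)

lemma eta_in_P:
  assumes "finite N" "E \<in> DAGs N" shows "eta N E \<in> P N"
proof -
  let ?V = "eta N ` DAGs N"
  have fV: "finite ?V" using finite_DAGs[OF assms(1)] by auto
  have E: "eta N E \<in> ?V" using assms by auto
  define w where "w = (\<lambda>v. if v = eta N E then (1::real) else 0)"
  have "eta N E = (\<lambda>c. \<Sum>v\<in>?V. w v * v c)"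
    using fV E by (simp add: w_def if_distrib[of "\<lambda>x. x * _"] sum.delta cong: if_cong)
  moreover have "(\<Sum>v\<in>?V. w v) = 1" using fV E unfolding w_def by (simp add: sum.delta)
  moreover have "\<forall>v\<in>?V. w v \<ge> 0" by (simp add: w_def)
  ultimately show ?thesis unfolding P_def conv_fin_def by blast
qed

lemma zero_in_P: "finite N \<Longrightarrow> (\<lambda>c. 0) \<in> P N"
  using eta_in_P[OF _ empty_in_DAGs, of N] by (simp add: eta_empty)

lemma P_nonneg: "x \<in> P N \<Longrightarrow> x c \<ge> 0"
  unfolding P_def conv_fin_def
  by (auto intro!: sum_nonneg mult_nonneg_nonneg simp: eta_def split: prod.split)

lemma star_in_DAGs:
  assumes "(a, B) \<in> Ups N" shows "(\<lambda>b. (b, a)) ` B \<in> DAGs N"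
proof -
  let ?E = "(\<lambda>b. (b, a)) ` B"
  have aB: "a \<notin> B" "a \<in> N" "B \<subseteq> N" using assms by (auto simp: Ups_def)
  have "(x, y) \<in> ?E" if "(x, y) \<in> ?E\<^sup>+" for x y
    using that by (induction rule: trancl_induct) (use aB in auto)
  then have "acyclic ?E" unfolding acyclic_def using aB by auto
  then show ?thesis using aB unfolding DAGs_def by auto
qed

lemma unit_vec_in_P:
  assumes "finite N" "d \<in> Ups N" shows "unit_vec d \<in> P N"
proof -
  obtain a B where d: "d = (a, B)" by fastforce
  have "eta N ((\<lambda>b. (b, a)) ` B) = unit_vec d"
    using assms(2) by (auto simp: d eta_def unit_vec_def pa_def Ups_def fun_eq_iff)
  then show ?thesis using eta_in_P[OF assms(1) star_in_DAGs] assms(2) d by metis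
qed

lemma inner_Ups_unit_vec: "finite N \<Longrightarrow> d \<in> Ups N \<Longrightarrow> inner_Ups N o' (unit_vec d) = o' d"
  by (simp add: inner_Ups_def unit_vec_def finite_Ups if_distrib[of "\<lambda>x. _ * x"] sum.delta
      cong: if_cong)

lemma inner_Ups_zero: "inner_Ups N o' (\<lambda>c. 0) = 0"
  by (simp add: inner_Ups_def)

lemma aff_indep_zero_unit_vecs:
  assumes fN: "finite N" and D: "D \<subseteq> Ups N"
  shows "aff_indep N (insert (\<lambda>c. 0) (unit_vec ` D))"
    and "card (insert (\<lambda>c. 0) (unit_vec ` D)) = card D + 1"
proof -
  let ?T = "insert (\<lambda>c. 0) (unit_vec ` D)"
  have fD: "finite D" using D finite_Ups[OF fN] finite_subset by auto
  have inj: "inj_on unit_vec D" by (auto simp: inj_on_def unit_vec_def fun_eq_iff)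
  have "unit_vec d d = 1" for d :: "'a \<times> 'a set" by (simp add: unit_vec_def)
  then have nz: "(\<lambda>c. 0) \<notin> unit_vec ` D" by (metis zero_neq_one imageE)
  show "card ?T = card D + 1" using fD nz inj by (simp add: card_image)
  show "aff_indep N ?T"
    unfolding aff_indep_def
  proof (intro conjI allI impI)
    show "finite ?T" using fD by auto
    fix c :: "('a \<times> 'a set \<Rightarrow> real) \<Rightarrow> real"
    assume h: "(\<Sum>x\<in>?T. c x) = 0 \<and> (\<forall>i\<in>Ups N. (\<Sum>x\<in>?T. c x * x i) = 0)"
    have cd: "c (unit_vec d) = 0" if d: "d \<in> D" for d
    proof -
      have "(\<Sum>x\<in>?T. c x * x d) = (\<Sum>d'\<in>D. c (unit_vec d') * unit_vec d' d)"
        using fD nz inj by (simp add: sum.reindex)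
      also have "\<dots> = c (unit_vec d)"
        using fD d by (simp add: unit_vec_def if_distrib[of "\<lambda>x. _ * x"] sum.delta
            eq_commute[of d] cong: if_cong)
      finally show ?thesis using h d D by auto
    qed
    have "(\<Sum>x\<in>?T. c x) = c (\<lambda>c. 0) + (\<Sum>d\<in>D. c (unit_vec d))"
      using fD nz inj by (simp add: sum.reindex)
    then have "c (\<lambda>c. 0) = 0" using h cd by simp
    then show "\<forall>x\<in>?T. c x = 0" using cd by auto
  qed
qed

lemma valid_rhs_nonneg: "finite N \<Longrightarrow> valid N o' u \<Longrightarrow> u \<ge> 0"
  using zero_in_P[of N] inner_Ups_zero[of N o'] unfolding valid_def by fastforce

lemma valid_zero_rhs_coeff_nonpos:
  "finite N \<Longrightarrow> valid N o' 0 \<Longrightarrow> c \<in> Ups N \<Longrightarrow> o' c \<le> 0"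
  using unit_vec_in_P[of N c] inner_Ups_unit_vec[of N c o'] unfolding valid_def by fastforce

lemma inner_Ups_convex_combination:
  assumes "finite V"
  shows "inner_Ups N o' (\<lambda>c. \<Sum>v\<in>V. w v * v c) = (\<Sum>v\<in>V. w v * inner_Ups N o' v)"
proof -
  have "inner_Ups N o' (\<lambda>c. \<Sum>v\<in>V. w v * v c) = (\<Sum>c\<in>Ups N. \<Sum>v\<in>V. o' c * (w v * v c))"
    unfolding inner_Ups_def by (simp add: sum_distrib_left)
  also have "\<dots> = (\<Sum>v\<in>V. \<Sum>c\<in>Ups N. o' c * (w v * v c))" by (rule sum.swap)
  finally show ?thesis unfolding inner_Ups_def by (simp add: sum_distrib_left mult.left_commute)
qed

lemma face_coord_zero_if_tight_vertices_zero:
  assumes fN: "finite N" and val: "valid N o' u" and x: "x \<in> face N o' u"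
    and tight: "\<forall>E\<in>DAGs N. inner_Ups N o' (eta N E) = u \<longrightarrow> eta N E c = 0"
  shows "x c = 0"
proof -
  let ?V = "eta N ` DAGs N"
  have fV: "finite ?V" using finite_DAGs[OF fN] by auto
  obtain w where w: "\<forall>v\<in>?V. w v \<ge> 0" "(\<Sum>v\<in>?V. w v) = 1" "x = (\<lambda>c. \<Sum>v\<in>?V. w v * v c)"
    using x unfolding face_def P_def conv_fin_def by blast
  have le: "inner_Ups N o' v \<le> u" if "v \<in> ?V" for v
    using val that eta_in_P[OF fN] unfolding valid_def by auto
  \<comment> \<open>x attains u, an average of values at most u, so every vertex of positive weight is tight.\<close>
  have "(\<Sum>v\<in>?V. w v * (u - inner_Ups N o' v)) = (\<Sum>v\<in>?V. w v) * u - inner_Ups N o' x"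
    by (simp add: w(3) inner_Ups_convex_combination[OF fV] right_diff_distrib sum_subtractf
        sum_distrib_right)
  also have "\<dots> = 0" using x w(2) by (simp add: face_def)
  finally have "\<forall>v\<in>?V. w v * (u - inner_Ups N o' v) = 0"
    using sum_nonneg_eq_0_iff[OF fV] w(1) le by (simp add: sum_nonneg_eq_0_iff[OF fV])
  then have "\<forall>v\<in>?V. w v * v c = 0" using tight by fastforce
  then show ?thesis using w(3) by (simp add: sum.neutral)
qed

lemma inner_Ups_eta:
  assumes fN: "finite N"
  shows "inner_Ups N o' (eta N E) = (\<Sum>y\<in>N. if (y, pa E y) \<in> Ups N then o' (y, pa E y) else 0)"
proof -
  have "(\<Sum>y\<in>N. if (y, pa E y) \<in> Ups N then o' (y, pa E y) else 0)
      = (\<Sum>y\<in>N. \<Sum>c\<in>Ups N. if c = (y, pa E y) then o' c else 0)"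
    using finite_Ups[OF fN] by (simp add: sum.delta')
  also have "\<dots> = (\<Sum>c\<in>Ups N. \<Sum>y\<in>N. if c = (y, pa E y) then o' c else 0)"
    by (rule sum.swap)
  also have "\<dots> = (\<Sum>c\<in>Ups N. o' c * eta N E c)"
  proof (rule sum.cong)
    fix c assume c: "c \<in> Ups N"
    obtain a B where ab: "c = (a, B)" by fastforce
    have "(\<Sum>y\<in>N. if c = (y, pa E y) then o' c else 0)
        = (\<Sum>y\<in>N. if y = a then (if B = pa E a then o' c else 0) else 0)"
      by (rule sum.cong) (auto simp: ab)
    also have "\<dots> = (if B = pa E a then o' c else 0)"
      using fN c ab by (simp add: sum.delta' Ups_def)
    finally show "(\<Sum>y\<in>N. if c = (y, pa E y) then o' c else 0) = o' c * eta N E c"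
      using c by (simp add: ab eta_def)
  qed simp
  finally show ?thesis unfolding inner_Ups_def by simp
qed

lemma inner_Ups_eta_shrink_parents:
  assumes fN: "finite N" and E: "E \<in> DAGs N" and aN: "a \<in> N" and A: "A \<subseteq> pa E a"
  defines "E' \<equiv> {p\<in>E. snd p \<noteq> a} \<union> (\<lambda>b. (b, a)) ` A"
  shows "E' \<in> DAGs N"
    and "inner_Ups N o' (eta N E') = inner_Ups N o' (eta N E)
      - (if (a, pa E a) \<in> Ups N then o' (a, pa E a) else 0) + (if (a, A) \<in> Ups N then o' (a, A) else 0)"
proof -
  have "E' \<subseteq> E" using A unfolding E'_def pa_def by auto
  then show "E' \<in> DAGs N" using E acyclic_subset unfolding DAGs_def by blast
  have pa_E': "pa E' y = (if y = a then A else pa E y)" for y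
    unfolding E'_def pa_def by auto
  define g where "g = (\<lambda>y B. if (y, B) \<in> Ups N then o' (y, B) else 0)"
  have inner_g: "inner_Ups N o' (eta N F) = (\<Sum>y\<in>N. g y (pa F y))" for F
    unfolding g_def by (rule inner_Ups_eta[OF fN])
  have "inner_Ups N o' (eta N E') = g a (pa E' a) + (\<Sum>y\<in>N - {a}. g y (pa E' y))"
    unfolding inner_g using fN aN by (simp add: sum.remove)
  also have "(\<Sum>y\<in>N - {a}. g y (pa E' y)) = (\<Sum>y\<in>N - {a}. g y (pa E y))"
    by (rule sum.cong) (auto simp: pa_E')
  also have "\<dots> = inner_Ups N o' (eta N E) - g a (pa E a)"
    unfolding inner_g using fN aN by (simp add: sum.remove)
  finally show "inner_Ups N o' (eta N E') = inner_Ups N o' (eta N E)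
      - (if (a, pa E a) \<in> Ups N then o' (a, pa E a) else 0) + (if (a, A) \<in> Ups N then o' (a, A) else 0)"
    by (simp add: pa_E' g_def)
qed

text \<open>For A = {} the hypothesis reads o'(a|B) < 0, as (a|{}) is not an index.\<close>

lemma tight_vertices_avoid_improvable_family:
  assumes fN: "finite N" and val: "valid N o' u" and aB: "(a, B) \<in> Ups N" and AB: "A \<subseteq> B"
    and improvable: "o' (a, B) < (if (a, A) \<in> Ups N then o' (a, A) else 0)"
  shows "\<forall>E\<in>DAGs N. inner_Ups N o' (eta N E) = u \<longrightarrow> eta N E (a, B) = 0"
proof (intro ballI impI)
  fix E assume E: "E \<in> DAGs N" and Eu: "inner_Ups N o' (eta N E) = u"
  show "eta N E (a, B) = 0"
  proof (rule ccontr)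
    assume "eta N E (a, B) \<noteq> 0"
    then have pa: "pa E a = B" by (auto simp: eta_def split: if_splits)
    have aN: "a \<in> N" using aB by (auto simp: Ups_def)
    have A: "A \<subseteq> pa E a" using pa AB by simp
    let ?E' = "{p\<in>E. snd p \<noteq> a} \<union> (\<lambda>b. (b, a)) ` A"
    have "inner_Ups N o' (eta N ?E') > u"
      using inner_Ups_eta_shrink_parents(2)[OF fN E aN A, of o'] pa aB Eu improvable by simp
    then show False
      using val eta_in_P[OF fN inner_Ups_eta_shrink_parents(1)[OF fN E aN A]]
      unfolding valid_def by fastforce
  qed
qed

lemma face_coord_affine:
  assumes fU: "finite (Ups N)" and c: "c \<in> Ups N" and i: "i \<in> Ups N" "i \<noteq> c" "o' i \<noteq> 0"
    and x: "inner_Ups N o' x = u" "x c = 0"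
  shows "x i = u / o' i + (\<Sum>j\<in>Ups N - {c, i}. - o' j / o' i * x j)"
proof -
  have "u = o' c * x c + (o' i * x i + (\<Sum>j\<in>Ups N - {c} - {i}. o' j * x j))"
    using x(1) fU c i unfolding inner_Ups_def by (simp add: sum.remove)
  moreover have "Ups N - {c} - {i} = Ups N - {c, i}" by auto
  ultimately have "u = o' i * x i + (\<Sum>j\<in>Ups N - {c, i}. o' j * x j)" using x(2) by simp
  then show ?thesis
    using i(3) by (simp add: field_simps sum_divide_distrib[symmetric] sum_negf)
qed

lemma facet_defining_obtain_aff_indep:
  assumes "facet_defining N o' u" "finite N" "Ups N \<noteq> {}"
  obtains S where "S \<subseteq> face N o' u" "aff_indep N S" "card S = card (Ups N)"
proof -
  have "card (Ups N) \<ge> 1" using assms(2,3) finite_Ups by (simp add: Suc_le_eq card_gt_0_iff)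
  then show ?thesis
    using assms(1) that unfolding facet_defining_def has_aff_dim_def by force
qed

lemma card_Diff_two_less:
  assumes "finite U" "c \<in> U" "i \<in> U" "i \<noteq> c"
  shows "card (U - {c, i}) + 1 < card U"
proof -
  have "card (U - {c, i}) = card U - 2" using assms by (simp add: card_Diff_subset)
  moreover have "card {c, i} \<le> card U" using assms by (intro card_mono) auto
  ultimately show ?thesis using assms(4) by simp
qed

lemma facet_nonzero_rhs_not_in_coord_hyperplane:
  assumes fN: "finite N" and fd: "facet_defining N o' u" and u: "u \<noteq> 0" and c: "c \<in> Ups N"
  shows "\<exists>x\<in>face N o' u. x c \<noteq> 0"
proof (rule ccontr)
  assume "\<not> ?thesis"
  then have zero: "\<forall>x\<in>face N o' u. x c = 0" by blast
  have fU: "finite (Ups N)" using finite_Ups[OF fN] .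
  obtain S where S: "S \<subseteq> face N o' u" "aff_indep N S" "card S = card (Ups N)"
    using facet_defining_obtain_aff_indep[OF fd fN] c by blast
  have on_face: "inner_Ups N o' x = u" "x c = 0" if "x \<in> S" for x
    using that S(1) zero unfolding face_def by auto
  show False
  proof (cases "\<exists>i\<in>Ups N - {c}. o' i \<noteq> 0")
    case True
    then obtain i where i: "i \<in> Ups N" "i \<noteq> c" "o' i \<noteq> 0" by auto
    have "x i = u / o' i + (\<Sum>j\<in>Ups N - {c, i}. - o' j / o' i * x j)" if "x \<in> S" for x
      using face_coord_affine[OF fU c i on_face[OF that]] .
    then have "card S \<le> card (Ups N - {c, i}) + 1"
      using aff_indep_card_le_affine_coords[OF fU _ S(2),
          of "{c, i}" "\<lambda>r. if r = i then u / o' i else 0" "\<lambda>r j. if r = i then - o' j / o' i else 0"]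
        on_face(2) c i by auto
    then show False using card_Diff_two_less[OF fU c i(1,2)] S(3) by simp
  next
    case False
    obtain x where "x \<in> S" using S(3) c fU by fastforce
    moreover have "inner_Ups N o' x = 0" if "x \<in> S" for x
      unfolding inner_Ups_def using False on_face(2)[OF that]
      by (intro sum.neutral) (metis DiffI mult_eq_0_iff singletonD)
    ultimately show False using on_face(1) u by auto
  qed
qed

lemma facet_pos_rhs_coeff_mono:
  assumes fN: "finite N" and fd: "facet_defining N o' u" and u: "u > 0"
    and aB: "(a, B) \<in> Ups N" and AB: "A \<subseteq> B"
  shows "(if (a, A) \<in> Ups N then o' (a, A) else 0) \<le> o' (a, B)"
proof (rule ccontr)
  assume "\<not> ?thesis"
  moreover have val: "valid N o' u" using fd unfolding facet_defining_def by simp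
  ultimately have "\<forall>x\<in>face N o' u. x (a, B) = 0"
    using face_coord_zero_if_tight_vertices_zero[OF fN val]
      tight_vertices_avoid_improvable_family[OF fN val aB AB] by auto
  then show False using facet_nonzero_rhs_not_in_coord_hyperplane[OF fN fd _ aB] u by auto
qed

lemma face_zero_rhs_coord_zero:
  assumes fN: "finite N" and val: "valid N o' 0" and x: "x \<in> face N o' 0"
    and d: "d \<in> Ups N" "o' d < 0"
  shows "x d = 0"
proof -
  have nonneg: "- (o' c * x c) \<ge> 0" if "c \<in> Ups N" for c
  proof -
    have "o' c \<le> 0" using valid_zero_rhs_coeff_nonpos[OF fN val that] .
    moreover have "x c \<ge> 0" using x P_nonneg unfolding face_def by blast
    ultimately show ?thesis using mult_nonpos_nonneg[of "o' c" "x c"] by linarith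
  qed
  have "(\<Sum>c\<in>Ups N. - (o' c * x c)) = 0"
    using x unfolding face_def inner_Ups_def by (simp add: sum_negf)
  then have "- (o' d * x d) = 0"
    using sum_nonneg_0[where f = "\<lambda>c. - (o' c * x c)", OF finite_Ups[OF fN] nonneg _ d(1)] by blast
  then show ?thesis using d(2) by simp
qed

lemma facet_defining_coeff_nonzero:
  assumes fN: "finite N" and Une: "Ups N \<noteq> {}" and fd: "facet_defining N o' u"
  shows "\<exists>c\<in>Ups N. o' c \<noteq> 0"
proof (rule ccontr)
  assume "\<not> ?thesis"
  then have "inner_Ups N o' x = 0" for x by (simp add: inner_Ups_def)
  moreover obtain S where "S \<subseteq> face N o' u" "card S = card (Ups N)"
    using facet_defining_obtain_aff_indep[OF fd fN Une] .
  then have "face N o' u \<noteq> {}" using finite_Ups[OF fN] Une by auto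
  ultimately have "u = 0" unfolding face_def by auto
  \<comment> \<open>so the face is all of P, which contains |Ups N| + 1 affinely independent points\<close>
  then have "insert (\<lambda>c. 0) (unit_vec ` Ups N) \<subseteq> face N o' u"
    using zero_in_P[OF fN] unit_vec_in_P[OF fN] \<open>\<And>x. inner_Ups N o' x = 0\<close>
    unfolding face_def by auto
  then have "card (Ups N) + 1 \<le> card (Ups N) - 1 + 1"
    using fd aff_indep_zero_unit_vecs[OF fN order_refl]
    unfolding facet_defining_def has_aff_dim_def by metis
  then show False using finite_Ups[OF fN] Une by (simp add: card_gt_0_iff)
qed

lemma facet_zero_rhs_is_coordinate:
  assumes fN: "finite N" and Une: "Ups N \<noteq> {}" and fd: "facet_defining N o' 0"
  shows "\<exists>c\<in>Ups N. \<exists>t>0. \<forall>d\<in>Ups N. o' d = (if d = c then - t else 0)"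
proof -
  have fU: "finite (Ups N)" using finite_Ups[OF fN] .
  have val: "valid N o' 0" using fd unfolding facet_defining_def by simp
  have nonpos: "\<forall>c\<in>Ups N. o' c \<le> 0" using valid_zero_rhs_coeff_nonpos[OF fN val] by blast
  obtain S where S: "S \<subseteq> face N o' 0" "aff_indep N S" "card S = card (Ups N)"
    using facet_defining_obtain_aff_indep[OF fd fN Une] .
  obtain c where c: "c \<in> Ups N" "o' c < 0"
    using facet_defining_coeff_nonzero[OF fN Une fd] nonpos by force
  have "o' d = 0" if d: "d \<in> Ups N" "d \<noteq> c" for d
  proof (rule ccontr)
    assume "o' d \<noteq> 0"
    with nonpos d have "o' d < 0" by force
    then have "\<forall>x\<in>S. \<forall>r\<in>{c, d}. x r = 0"
      using face_zero_rhs_coord_zero[OF fN val] S(1) c d(1) by blast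
    moreover have "{c, d} \<subseteq> Ups N" using c d by simp
    ultimately have "card S \<le> card (Ups N - {c, d}) + 1"
      using aff_indep_card_le_vanishing_coords[OF fU _ S(2)] by blast
    then show False using card_Diff_two_less[OF fU c(1) d] S(3) by simp
  qed
  then show ?thesis using c by (intro bexI[of _ c] exI[of _ "- o' c"]) auto
qed

lemma coordinate_inequality_facet_defining:
  assumes fN: "finite N" and c: "c \<in> Ups N" and t: "t > 0"
    and o': "\<forall>d\<in>Ups N. o' d = (if d = c then - t else 0)"
  shows "facet_defining N o' 0"
proof -
  have fU: "finite (Ups N)" using finite_Ups[OF fN] .
  have inner: "inner_Ups N o' x = - t * x c" for x
  proof -
    have "inner_Ups N o' x = (\<Sum>d\<in>Ups N. if d = c then - t * x c else 0)"
      unfolding inner_Ups_def by (rule sum.cong) (auto simp: o')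
    then show ?thesis using fU c by simp
  qed
  have val: "valid N o' 0" unfolding valid_def using inner P_nonneg[of _ N c] t by simp
  have face: "face N o' 0 = {x \<in> P N. x c = 0}" using inner t unfolding face_def by auto
  let ?T = "insert (\<lambda>c. 0) (unit_vec ` (Ups N - {c}))"
  have "unit_vec d \<in> face N o' 0" if "d \<in> Ups N - {c}" for d
  proof -
    have "unit_vec d c = 0" using that unfolding unit_vec_def by auto
    then show ?thesis using unit_vec_in_P[OF fN, of d] that unfolding face by blast
  qed
  then have "?T \<subseteq> face N o' 0" using zero_in_P[OF fN] unfolding face by blast
  moreover have "aff_indep N ?T" "card ?T = card (Ups N) - 1 + 1"
    using aff_indep_zero_unit_vecs[OF fN, of "Ups N - {c}"] fU c by simp_all
  ultimately have lower: "\<exists>S\<subseteq>face N o' 0. aff_indep N S \<and> card S = card (Ups N) - 1 + 1"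
    by blast
  have upper: "card S \<le> card (Ups N) - 1 + 1" if "S \<subseteq> face N o' 0" "aff_indep N S" for S
  proof -
    have "\<forall>x\<in>S. \<forall>r\<in>{c}. x r = 0" using that(1) unfolding face by auto
    moreover have "{c} \<subseteq> Ups N" using c by simp
    ultimately have "card S \<le> card (Ups N - {c}) + 1"
      using aff_indep_card_le_vanishing_coords[OF fU _ that(2)] by blast
    then show ?thesis using fU c by simp
  qed
  show ?thesis
    unfolding facet_defining_def has_aff_dim_def using val lower upper by blast
qed

lemma eta_empty_in_face_iff: "finite N \<Longrightarrow> eta N {} \<in> face N o' u \<longleftrightarrow> u = 0"
  using zero_in_P[of N] by (auto simp: eta_empty face_def inner_Ups_zero)

lemma facet_zero_rhs_iff_coordinate:
  assumes "finite N" "Ups N \<noteq> {}"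
  shows "facet_defining N o' 0 \<longleftrightarrow>
    (\<exists>c\<in>Ups N. \<exists>t>0. \<forall>d\<in>Ups N. o' d = (if d = c then - t else 0))"
  using facet_zero_rhs_is_coordinate[OF assms] coordinate_inequality_facet_defining[OF assms(1)]
  by blast

lemma facet_pos_rhs_family_coeff_mono:
  assumes fN: "finite N" and fd: "facet_defining N o' u" and u: "u > 0"
    and A: "A \<noteq> {}" "A \<subseteq> B" and B: "B \<subseteq> N - {a}" and a: "a \<in> N"
  shows "o' (a, A) \<le> o' (a, B) \<and> 0 \<le> o' (a, A)"
proof -
  have aA: "(a, A) \<in> Ups N" and aB: "(a, B) \<in> Ups N" and no_empty: "(a, {}) \<notin> Ups N"
    using A B a by (auto simp: Ups_def)
  show ?thesis
    using facet_pos_rhs_coeff_mono[OF fN fd u aB A(2)]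
      facet_pos_rhs_coeff_mono[OF fN fd u aA empty_subsetI] aA no_empty by simp
qed

theorem lemma2:
  fixes N :: "'a set" and o' :: "'a \<times> 'a set \<Rightarrow> real" and u :: real
  assumes "finite N" and "card N \<ge> 2" and "valid N o' u"
  shows "u \<ge> 0
    \<and> (u = 0 \<longleftrightarrow> eta N {} \<in> face N o' u)
    \<and> (u = 0 \<longrightarrow> (\<forall>c\<in>Ups N. o' c \<le> 0))
    \<and> ((facet_defining N o' u \<and> eta N {} \<in> face N o' u) \<longleftrightarrow>
         (u = 0 \<and> (\<exists>c\<in>Ups N. \<exists>t>0. \<forall>d\<in>Ups N. o' d = (if d = c then - t else 0))))
    \<and> ((facet_defining N o' u \<and> u > 0) \<longrightarrow>
         (\<forall>a\<in>N. \<forall>A B. A \<noteq> {} \<and> A \<subseteq> B \<and> B \<subseteq> N - {a} \<longrightarrow>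
              o' (a, A) \<le> o' (a, B) \<and> 0 \<le> o' (a, A)))"
proof -
  note fN = assms(1) and val = assms(3)
  have Une: "Ups N \<noteq> {}" using Ups_nonempty[OF fN assms(2)] .
  show ?thesis
  proof (intro conjI)
    show "u \<ge> 0" using valid_rhs_nonneg[OF fN val] .
    show "u = 0 \<longleftrightarrow> eta N {} \<in> face N o' u" using eta_empty_in_face_iff[OF fN] by simp
    show "u = 0 \<longrightarrow> (\<forall>c\<in>Ups N. o' c \<le> 0)"
      using valid_zero_rhs_coeff_nonpos[OF fN] val by blast
    show "(facet_defining N o' u \<and> eta N {} \<in> face N o' u) \<longleftrightarrow>
        (u = 0 \<and> (\<exists>c\<in>Ups N. \<exists>t>0. \<forall>d\<in>Ups N. o' d = (if d = c then - t else 0)))"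
      using eta_empty_in_face_iff[OF fN] facet_zero_rhs_iff_coordinate[OF fN Une]
      by (cases "u = 0") simp_all
    show "facet_defining N o' u \<and> u > 0 \<longrightarrow> (\<forall>a\<in>N. \<forall>A B. A \<noteq> {} \<and> A \<subseteq> B \<and> B \<subseteq> N - {a}
        \<longrightarrow> o' (a, A) \<le> o' (a, B) \<and> 0 \<le> o' (a, A))"
      using facet_pos_rhs_family_coeff_mono[OF fN] by blast
  qed
qed

end
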